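(* Let $r\ge1$ and let $\tau,\tau'$ be permutations of $F^r$ fixing $\mathbf 0$. For a permutation $\pi$ of the $2^{r+1}$ coordinate positions of $F^{2^{r+1}}$, we have $SQS_\tau\sim_\pi SQS_{\tau'}$ if and only if $\pi(S_\tau)=S_{\tau'}$.
   Context: $F=\mathrm{GF}(2)$, $\mathbf 0$ is the all-zero vector. Index the coordinates of $F^{2^r}$ by the vectors of $F^r$; $e_a$ is the unit vector with a single $1$ at position $a$. The extended Hamming code is $\mathcal H=\{x\in F^{2^r}:\sum_{a:x_a=1}a=\mathbf 0,\ \mathrm{wt}(x)\text{ even}\}$. For $x,y\in F^{2^r}$, $x|y\in F^{2^{r+1}}$ is the concatenation and $C\times D=\{x|y:x\in C,y\in D\}$. Define $S_\tau=\bigcup_{a\in F^r}(\mathcal H+e_a+e_{\mathbf 0})\times(\mathcal H+e_{\tau(a)}+e_{\tau(\mathbf 0)})$, an extended perfect code of length $2^{r+1}$ containing the zero vector. The coordinate positions of $F^{2^{r+1}}$ are denoted $(\{a\},\emptyset)$ (position $a$ in the first half) and $(\emptyset,\{a\})$ (position $a$ in the second half), and the support of $x|y$ is written $(\mathrm{supp}(x),\mathrm{supp}(y))$. $SQS_\tau$ is the Steiner quadruple system on these positions consisting of $Q_0=\{(\{a,b,c,d\},\emptyset): a,b,c,d \text{ pairwise distinct}, a+b+c+d=\mathbf 0\}$, $Q_1=\{(\emptyset,\{a,b,c,d\}): a,b,c,d \text{ pairwise distinct}, a+b+c+d=\mathbf 0\}$ and $Q_\tau=\{(\{a,c\},\{b,d\}):\tau(a+c)=b+d\neq\mathbf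 0\}$ (these are the supports of the weight-4 codewords of $S_\tau$). Permutations act on vectors by $\pi(y)_i=y_{\pi^{-1}(i)}$. $SQS_\tau\sim_\pi SQS_{\tau'}$ means $\pi$ maps the set of quadruples of $SQS_\tau$ onto that of $SQS_{\tau'}$. *)

theory Defs
  imports Main
begin

text \<open>A vector of F^r (F = GF(2)) is represented by its support, a subset of
  {0..<r}; vector addition is symmetric difference and the zero vector is the empty set.
  A binary word of length 2^r whose coordinates are indexed by F^r is represented by its
  support, a subset of F^r. Coordinate positions of F^(2^(r+1)) are pairs (False, a)
  (position a in the first half) and (True, a) (position a in the second half).\<close>

definition vecs :: "nat \<Rightarrow> nat set set" where
  "vecs r = Pow {..<r}"

definition vadd :: "nat set \<Rightarrow> nat set \<Rightarrow> nat set" where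
  "vadd a b = (a - b) \<union> (b - a)"

definition vsum :: "nat set set \<Rightarrow> nat set" where
  "vsum X = {i. odd (card {a \<in> X. i \<in> a})}"

text \<open>Words: supports. Adding a word to another word = symmetric difference of supports;
  the unit vector e_a has support {a}.\<close>
definition wadd :: "'a set \<Rightarrow> 'a set \<Rightarrow> 'a set" where
  "wadd x y = (x - y) \<union> (y - x)"

definition hamming :: "nat \<Rightarrow> nat set set set" where
  "hamming r = {x. x \<subseteq> vecs r \<and> vsum x = {} \<and> even (card x)}"

definition hcoset :: "nat \<Rightarrow> nat set \<Rightarrow> nat set set set" where
  "hcoset r a = (\<lambda>x. wadd (wadd x {a}) {{}}) ` hamming r"

definition concat_w :: "nat set set \<Rightarrow> nat set set \<Rightarrow> (bool \<times> nat set) set" where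
  "concat_w x y = Pair False ` x \<union> Pair True ` y"

definition positions :: "nat \<Rightarrow> (bool \<times> nat set) set" where
  "positions r = UNIV \<times> vecs r"

definition S_code :: "nat \<Rightarrow> (nat set \<Rightarrow> nat set) \<Rightarrow> (bool \<times> nat set) set set" where
  "S_code r \<tau> = (\<Union>a\<in>vecs r. {concat_w x y | x y. x \<in> hcoset r a \<and> y \<in> hcoset r (\<tau> a)})"

definition Q0 :: "nat \<Rightarrow> (bool \<times> nat set) set set" where
  "Q0 r = {Pair False ` {a, b, c, d} | a b c d. a \<in> vecs r \<and> b \<in> vecs r \<and> c \<in> vecs r \<and> d \<in> vecs r
     \<and> distinct [a, b, c, d] \<and> vadd (vadd a b) (vadd c d) = {}}"

definition Q1 :: "nat \<Rightarrow> (bool \<times> nat set) set set" where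
  "Q1 r = {Pair True ` {a, b, c, d} | a b c d. a \<in> vecs r \<and> b \<in> vecs r \<and> c \<in> vecs r \<and> d \<in> vecs r
     \<and> distinct [a, b, c, d] \<and> vadd (vadd a b) (vadd c d) = {}}"

definition Qtau :: "nat \<Rightarrow> (nat set \<Rightarrow> nat set) \<Rightarrow> (bool \<times> nat set) set set" where
  "Qtau r \<tau> = {Pair False ` {a, c} \<union> Pair True ` {b, d} | a b c d.
     a \<in> vecs r \<and> b \<in> vecs r \<and> c \<in> vecs r \<and> d \<in> vecs r
     \<and> \<tau> (vadd a c) = vadd b d \<and> vadd b d \<noteq> {}}"

definition SQS :: "nat \<Rightarrow> (nat set \<Rightarrow> nat set) \<Rightarrow> (bool \<times> nat set) set set" where
  "SQS r \<tau> = Q0 r \<union> Q1 r \<union> Qtau r \<tau>"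

end

theory Submission
  imports Defs
begin

text \<open>The weight-four codewords of \<open>S\<^sub>\<tau>\<close> are the quadruples of \<open>SQS\<^sub>\<tau>\<close>, so a permutation
  mapping \<open>S\<^sub>\<tau>\<close> onto \<open>S\<^sub>\<tau>\<^sub>'\<close> maps the quadruple systems onto each other.

  Conversely, call a half \<open>Y\<close> of the points admissible for a quadruple system if every block with
  at least three points in \<open>Y\<close> (or in its complement) lies inside it, and the sum of two blocks
  meeting in two points is again a block whenever the first does not straddle \<open>Y\<close> and the second
  meets \<open>Y\<close> in two points. Admissibility is preserved by isomorphisms, and the first half is
  admissible for \<open>SQS\<^sub>\<tau>\<close>. Relative to the first half, every codeword of \<open>S\<^sub>\<tau>\<close> is a sum of
  non-straddling blocks and at most one block meeting it in two points, because extended Hamming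
  codewords are sums of weight-four ones. Relative to any admissible half \<open>Y\<close> of \<open>SQS\<^sub>\<tau>\<^sub>'\<close>,
  Pasch moves show that a block \<open>{a, a + s | b, b + \<tau>' s}\<close> inside \<open>Y\<close> forces
  \<open>\<tau>'(v + s) = \<tau>' v + \<tau>' s\<close> for all \<open>v\<close>, so adding blocks inside \<open>Y\<close> or its complement preserves
  \<open>S\<^sub>\<tau>\<^sub>'\<close>. Hence the image under \<open>\<pi>\<close> of the first half shows \<open>\<pi>(S\<^sub>\<tau>) \<subseteq> S\<^sub>\<tau>\<^sub>'\<close>, and the
  inverse permutation gives the other inclusion.\<close>

lemma vadd_commute: "vadd a b = vadd b a"
  by (auto simp: vadd_def)

lemma vadd_assoc: "vadd (vadd a b) c = vadd a (vadd b c)"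
  by (auto simp: vadd_def)

lemma vadd_left_commute: "vadd a (vadd b c) = vadd b (vadd a c)"
  by (auto simp: vadd_def)

lemma vadd_self [simp]: "vadd a a = {}"
  and vadd_self_left [simp]: "vadd a (vadd a b) = b"
  and vadd_empty [simp]: "vadd a {} = a" "vadd {} a = a"
  and vadd_eq_empty_iff [simp]: "vadd a b = {} \<longleftrightarrow> a = b"
  and vadd_left_cancel [simp]: "vadd a b = vadd a c \<longleftrightarrow> b = c"
  by (auto simp: vadd_def)

lemma vadd_eq_left_iff: "vadd a b = a \<longleftrightarrow> b = {}" "a = vadd a b \<longleftrightarrow> b = {}"
  by (auto simp: vadd_def)

lemma empty_in_vecs [simp]: "{} \<in> vecs r"
  and vadd_in_vecs [simp]: "a \<in> vecs r \<Longrightarrow> b \<in> vecs r \<Longrightarrow> vadd a b \<in> vecs r"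
  and finite_vecs [simp]: "finite (vecs r)"
  by (auto simp: vecs_def vadd_def)

lemma card_vecs: "card (vecs r) = 2 ^ r"
  by (simp add: vecs_def card_Pow)

lemma wadd_commute: "wadd a b = wadd b a"
  by (auto simp: wadd_def)

lemma wadd_assoc: "wadd (wadd a b) c = wadd a (wadd b c)"
  by (auto simp: wadd_def)

lemma wadd_empty [simp]: "wadd a {} = a" "wadd {} a = a"
  and wadd_wadd_left [simp]: "wadd a (wadd b a) = b"
  by (auto simp: wadd_def)

lemma wadd_pairs: "a \<noteq> c \<Longrightarrow> a \<noteq> c' \<Longrightarrow> c \<noteq> c' \<Longrightarrow> wadd {a, c} {a, c'} = {c, c'}"
  by (auto simp: wadd_def)

lemma finite_wadd [simp]: "finite A \<Longrightarrow> finite B \<Longrightarrow> finite (wadd A B)"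
  by (simp add: wadd_def)

lemma wadd_subset: "A \<subseteq> P \<Longrightarrow> B \<subseteq> P \<Longrightarrow> wadd A B \<subseteq> P"
  by (auto simp: wadd_def)

lemma image_wadd:
  "inj_on f P \<Longrightarrow> A \<subseteq> P \<Longrightarrow> B \<subseteq> P \<Longrightarrow> f ` wadd A B = wadd (f ` A) (f ` B)"
  unfolding wadd_def inj_on_def by blast

lemma card_wadd:
  assumes "finite A" "finite B"
  shows "card (wadd A B) + 2 * card (A \<inter> B) = card A + card B"
proof -
  have "card (wadd A B) = card (A - B) + card (B - A)"
    unfolding wadd_def by (rule card_Un_disjoint) (use assms in auto)
  with card_Int_Diff[of A B] card_Int_Diff[of B A] assms show ?thesis
    by (simp add: Int_commute)
qed

lemma even_card_wadd:
  "finite A \<Longrightarrow> finite B \<Longrightarrow> even (card (wadd A B)) \<longleftrightarrow> (even (card A) \<longleftrightarrow> even (card B))"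
  using card_wadd[of A B] by (metis even_add even_mult_iff even_numeral)

lemma vsum_wadd:
  assumes "finite X" "finite Y"
  shows "vsum (wadd X Y) = vadd (vsum X) (vsum Y)"
proof -
  have "{a \<in> wadd X Y. i \<in> a} = wadd {a \<in> X. i \<in> a} {a \<in> Y. i \<in> a}" for i
    by (auto simp: wadd_def)
  with assms show ?thesis
    by (auto simp: vsum_def vadd_def even_card_wadd)
qed

lemma vsum_empty [simp]: "vsum {} = {}"
  by (simp add: vsum_def)

lemma vsum_singleton [simp]: "vsum {a} = a"
proof -
  have "{b \<in> {a}. i \<in> b} = (if i \<in> a then {a} else {})" for i
    by auto
  then show ?thesis
    by (auto simp: vsum_def)
qed

lemma vsum_insert: "finite X \<Longrightarrow> a \<notin> X \<Longrightarrow> vsum (insert a X) = vadd a (vsum X)"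
proof -
  assume "finite X" "a \<notin> X"
  moreover have "insert a X = wadd {a} X"
    using \<open>a \<notin> X\<close> by (auto simp: wadd_def)
  ultimately show ?thesis
    using vsum_wadd[of "{a}" X] by simp
qed

lemma vsum_pair: "a \<noteq> c \<Longrightarrow> vsum {a, c} = vadd a c"
  by (simp add: vsum_insert)

lemma vsum_quad: "distinct [a, b, c, d] \<Longrightarrow> vsum {a, b, c, d} = vadd (vadd a b) (vadd c d)"
  by (simp add: vsum_insert vadd_assoc)

lemma vsum_in_vecs:
  assumes "X \<subseteq> vecs r"
  shows "vsum X \<in> vecs r"
proof -
  have "{a \<in> X. i \<in> a} = {}" if "r \<le> i" for i
    using assms that by (force simp: vecs_def)
  then have "i < r" if "i \<in> vsum X" for i
    using that unfolding vsum_def by (metis (no_types, lifting) card.empty even_zero mem_Collect_eq not_less)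
  then show ?thesis
    by (auto simp: vecs_def)
qed

lemma card_eq_4_iff: "card X = 4 \<longleftrightarrow> (\<exists>a b c d. X = {a, b, c, d} \<and> distinct [a, b, c, d])"
proof
  assume "card X = 4"
  then have "card X = Suc 3"
    by simp
  then obtain a A where X: "X = insert a A" "a \<notin> A" "card A = 3"
    by (auto simp only: card_Suc_eq)
  then obtain b c d where "A = {b, c, d}" "b \<noteq> c" "c \<noteq> d" "b \<noteq> d"
    using card_3_iff[of A] by auto
  with X show "\<exists>a b c d. X = {a, b, c, d} \<and> distinct [a, b, c, d]"
    by auto
next
  assume "\<exists>a b c d. X = {a, b, c, d} \<and> distinct [a, b, c, d]"
  then show "card X = 4"
    by auto
qed

definition half :: "bool \<Rightarrow> (bool \<times> 'a) set \<Rightarrow> 'a set" where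
  "half h z = {a. (h, a) \<in> z}"

lemma half_Pair_image [simp]: "half h (Pair h' ` X) = (if h = h' then X else {})"
  and half_Un [simp]: "half h (z \<union> w) = half h z \<union> half h w"
  and half_empty [simp]: "half h {} = {}"
  and half_wadd [simp]: "half h (wadd z w) = wadd (half h z) (half h w)"
  by (auto simp: half_def wadd_def)

lemma half_concat_w [simp]: "half False (concat_w x y) = x" "half True (concat_w x y) = y"
  by (auto simp: concat_w_def)

lemma concat_w_halves: "concat_w (half False z) (half True z) = z"
proof (rule set_eqI)
  fix p :: "bool \<times> nat set"
  show "p \<in> concat_w (half False z) (half True z) \<longleftrightarrow> p \<in> z"
    by (cases p, cases "fst p") (auto simp: concat_w_def half_def)
qed

lemma concat_w_eq_iff [simp]: "concat_w X Y = concat_w X' Y' \<longleftrightarrow> X = X' \<and> Y = Y'"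
  by (metis half_concat_w)

lemma word_eqI:
  assumes "\<And>h. half h z = half h w"
  shows "z = w"
proof (rule set_eqI)
  fix p
  show "p \<in> z \<longleftrightarrow> p \<in> w"
    using assms[of "fst p"] by (cases p) (auto simp: half_def set_eq_iff)
qed

lemma positions_iff [simp]: "(h, a) \<in> positions r \<longleftrightarrow> a \<in> vecs r"
  by (simp add: positions_def)

lemma finite_positions [simp]: "finite (positions r)"
  by (simp add: positions_def)

lemma card_positions: "card (positions r) = 2 * 2 ^ r"
  by (simp add: positions_def card_cartesian_product card_vecs)

lemma concat_w_subset_positions_iff [simp]:
  "concat_w x y \<subseteq> positions r \<longleftrightarrow> x \<subseteq> vecs r \<and> y \<subseteq> vecs r"
  by (auto simp: concat_w_def)

lemma half_subset_vecs: "z \<subseteq> positions r \<Longrightarrow> half h z \<subseteq> vecs r"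
  by (auto simp: half_def)

lemma finite_half: "z \<subseteq> positions r \<Longrightarrow> finite (half h z)"
  using half_subset_vecs finite_vecs finite_subset by metis

lemma card_image_Pair [simp]: "card (Pair h ` X) = card X"
  by (simp add: card_image inj_on_def)

lemma wadd_concat_w: "wadd (concat_w X Y) (concat_w X' Y') = concat_w (wadd X X') (wadd Y Y')"
proof (rule word_eqI)
  fix h
  show "half h (wadd (concat_w X Y) (concat_w X' Y')) = half h (concat_w (wadd X X') (wadd Y Y'))"
    by (cases h) simp_all
qed

lemma card_concat_w: "finite X \<Longrightarrow> finite Y \<Longrightarrow> card (concat_w X Y) = card X + card Y"
  unfolding concat_w_def by (subst card_Un_disjoint) auto

lemma card_halves: "z \<subseteq> positions r \<Longrightarrow> card z = card (half False z) + card (half True z)"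
  by (metis card_concat_w concat_w_halves finite_half)

abbreviation first_half :: "nat \<Rightarrow> (bool \<times> nat set) set" where
  "first_half r \<equiv> Pair False ` vecs r"

lemma Int_first_half: "B \<subseteq> positions r \<Longrightarrow> B \<inter> first_half r = Pair False ` half False B"
  and Diff_first_half: "B \<subseteq> positions r \<Longrightarrow> B - first_half r = Pair True ` half True B"
  by (auto simp: half_def image_iff subset_iff split: prod.splits)

section \<open>The extended Hamming code and the codes \<open>S\<^sub>\<tau>\<close>\<close>

lemma hamming_iff: "x \<in> hamming r \<longleftrightarrow> x \<subseteq> vecs r \<and> even (card x) \<and> vsum x = {}"
  by (auto simp: hamming_def)

lemma finite_hamming: "x \<in> hamming r \<Longrightarrow> finite x"
  unfolding hamming_iff using finite_subset[OF _ finite_vecs] by blast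

lemma wadd_in_hamming: "x \<in> hamming r \<Longrightarrow> y \<in> hamming r \<Longrightarrow> wadd x y \<in> hamming r"
  using finite_hamming[of x r] finite_hamming[of y r]
  by (simp add: hamming_iff wadd_subset even_card_wadd vsum_wadd)

lemma wadd_in_hamming_of_vsum_eq:
  assumes "X \<subseteq> vecs r" "Z \<subseteq> vecs r" "even (card X)" "even (card Z)" "vsum X = vsum Z"
  shows "wadd X Z \<in> hamming r"
proof -
  have "finite X" "finite Z"
    using assms(1,2) finite_subset[OF _ finite_vecs] by blast+
  with assms show ?thesis
    by (simp add: hamming_iff wadd_subset even_card_wadd vsum_wadd)
qed

lemma triple_completion_in_hamming:
  assumes "{p, q, t} \<subseteq> vecs r" "distinct [p, q, t]"
  shows "{p, q, t, vadd p (vadd q t)} \<in> hamming r" "card {p, q, t, vadd p (vadd q t)} = 4"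
proof -
  define u where "u = vadd p (vadd q t)"
  have "u = vadd q (vadd p t)" "u = vadd t (vadd p q)"
    unfolding u_def by (auto simp: vadd_def)
  then have "u \<noteq> p" "u \<noteq> q" "u \<noteq> t"
    using assms(2) u_def vadd_eq_left_iff by auto
  then have "distinct [p, q, t, u]"
    using assms(2) by simp
  moreover have "{p, q, t, u} \<subseteq> vecs r"
    using assms(1) by (simp add: u_def)
  moreover have "vadd (vadd p q) (vadd t u) = {}"
    unfolding u_def by (auto simp: vadd_def)
  ultimately show "{p, q, t, vadd p (vadd q t)} \<in> hamming r" "card {p, q, t, vadd p (vadd q t)} = 4"
    unfolding u_def[symmetric] by (simp_all add: hamming_iff vsum_quad)
qed

lemma hamming_quad_meeting:
  assumes X: "X \<in> hamming r" "X \<noteq> {}"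
  obtains Q where "Q \<in> hamming r" "card Q = 4" "3 \<le> card (X \<inter> Q)"
proof -
  have "card X \<noteq> 0"
    using X finite_hamming by auto
  moreover have "card X \<noteq> 2"
  proof
    assume "card X = 2"
    then obtain p q where "X = {p, q}" "p \<noteq> q"
      by (meson card_2_iff)
    with X show False
      by (simp add: hamming_iff vsum_pair)
  qed
  moreover have "even (card X)"
    using X by (simp add: hamming_iff)
  ultimately have "3 \<le> card X"
    by presburger
  then obtain T where "T \<subseteq> X" "card T = 3"
    by (meson obtain_subset_with_card_n)
  then obtain p q t where pqt: "{p, q, t} \<subseteq> X" "distinct [p, q, t]"
    by (auto simp: card_3_iff)
  define Q where "Q = {p, q, t, vadd p (vadd q t)}"
  have "{p, q, t} \<subseteq> vecs r"
    using pqt(1) X(1) by (auto simp: hamming_iff)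
  then have "Q \<in> hamming r" "card Q = 4"
    unfolding Q_def using pqt(2) by (rule triple_completion_in_hamming)+
  moreover have "card {p, q, t} \<le> card (X \<inter> Q)"
    using pqt(1) finite_hamming[OF X(1)] by (intro card_mono) (auto simp: Q_def)
  ultimately show ?thesis
    using that pqt(2) by simp
qed

lemma hcoset_iff:
  assumes "a \<in> vecs r"
  shows "x \<in> hcoset r a \<longleftrightarrow> x \<subseteq> vecs r \<and> even (card x) \<and> vsum x = a"
proof -
  let ?shift = "\<lambda>x. wadd (wadd x {a}) {{}}"
  have shift_props: "?shift x \<subseteq> vecs r \<and> (even (card (?shift x)) \<longleftrightarrow> even (card x))
      \<and> vsum (?shift x) = vadd (vsum x) a" if "x \<subseteq> vecs r" for x
  proof -
    have "finite x"
      using that finite_vecs finite_subset by blast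
    moreover have "?shift x \<subseteq> vecs r"
      using that assms by (auto simp: wadd_def)
    ultimately show ?thesis
      by (simp add: even_card_wadd vsum_wadd)
  qed
  have shift_shift: "?shift (?shift x) = x" for x
    by (auto simp: wadd_def)
  show ?thesis
  proof
    assume "x \<in> hcoset r a"
    then obtain x0 where "x0 \<in> hamming r" "x = ?shift x0"
      unfolding hcoset_def by blast
    then show "x \<subseteq> vecs r \<and> even (card x) \<and> vsum x = a"
      using shift_props[of x0] by (simp add: hamming_iff)
  next
    assume x: "x \<subseteq> vecs r \<and> even (card x) \<and> vsum x = a"
    then have "?shift x \<in> hamming r"
      using shift_props[of x] by (simp add: hamming_iff)
    then have "?shift (?shift x) \<in> hcoset r a"
      unfolding hcoset_def by (rule imageI)
    then show "x \<in> hcoset r a"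
      by (simp only: shift_shift)
  qed
qed

text \<open>Since \<open>H + e\<^sub>a + e\<^sub>0\<close> consists of the even words with syndrome \<open>a\<close> (\<open>hcoset_iff\<close>), the
  codewords of \<open>S\<^sub>\<tau>\<close> are the words \<open>x|y\<close> with \<open>x\<close>, \<open>y\<close> even and \<open>\<tau>(\<Sigma>x) = \<Sigma>y\<close>.\<close>

definition is_S_word :: "nat \<Rightarrow> (nat set \<Rightarrow> nat set) \<Rightarrow> (bool \<times> nat set) set \<Rightarrow> bool" where
  "is_S_word r \<tau> z \<longleftrightarrow> z \<subseteq> positions r \<and> even (card (half False z)) \<and> even (card (half True z))
     \<and> \<tau> (vsum (half False z)) = vsum (half True z)"

lemma S_code_iff:
  assumes "\<tau> ` vecs r \<subseteq> vecs r"
  shows "z \<in> S_code r \<tau> \<longleftrightarrow> is_S_word r \<tau> z"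
proof
  assume "z \<in> S_code r \<tau>"
  then obtain a x y where a: "a \<in> vecs r" and "x \<in> hcoset r a" "y \<in> hcoset r (\<tau> a)" "z = concat_w x y"
    by (auto simp: S_code_def)
  moreover have "\<tau> a \<in> vecs r"
    using assms a by blast
  ultimately show "is_S_word r \<tau> z"
    by (simp add: is_S_word_def hcoset_iff)
next
  assume z: "is_S_word r \<tau> z"
  let ?a = "vsum (half False z)"
  have halves: "half False z \<subseteq> vecs r" "half True z \<subseteq> vecs r"
    using z half_subset_vecs by (auto simp: is_S_word_def)
  then have a: "?a \<in> vecs r" "\<tau> ?a \<in> vecs r"
    using vsum_in_vecs assms by blast+
  then have "half False z \<in> hcoset r ?a" "half True z \<in> hcoset r (\<tau> ?a)"
    using z halves by (simp_all add: hcoset_iff is_S_word_def)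
  then have "z \<in> {concat_w x y | x y. x \<in> hcoset r ?a \<and> y \<in> hcoset r (\<tau> ?a)}"
    using concat_w_halves[of z] by blast
  with a show "z \<in> S_code r \<tau>"
    unfolding S_code_def by blast
qed

lemma is_S_word_wadd:
  assumes z: "is_S_word r \<tau> z"
    and B: "B \<subseteq> positions r" "even (card (half False B))" "even (card (half True B))"
    and "\<tau> (vadd (vsum (half False z)) (vsum (half False B)))
      = vadd (\<tau> (vsum (half False z))) (vsum (half True B))"
  shows "is_S_word r \<tau> (wadd z B)"
proof -
  have "finite (half h z)" "finite (half h B)" for h
    using z B(1) finite_half by (auto simp: is_S_word_def)
  with assms show ?thesis
    by (simp add: is_S_word_def wadd_subset even_card_wadd vsum_wadd)
qed

section \<open>Admissible halves of a quadruple system\<close>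

definition admissible_half :: "'p set set \<Rightarrow> 'p set \<Rightarrow> 'p set \<Rightarrow> bool" where
  "admissible_half D P Y \<longleftrightarrow> Y \<subseteq> P \<and> finite P \<and> card Y = card (P - Y)
     \<and> (\<forall>B\<in>D. B \<subseteq> P \<and> card B = 4)
     \<and> (\<forall>B\<in>D. 3 \<le> card (B \<inter> Y) \<longrightarrow> B \<subseteq> Y)
     \<and> (\<forall>B\<in>D. 3 \<le> card (B - Y) \<longrightarrow> B \<inter> Y = {})
     \<and> (\<forall>B\<in>D. \<forall>B'\<in>D. (B \<subseteq> Y \<or> B \<inter> Y = {}) \<longrightarrow> card (B' \<inter> Y) = 2 \<longrightarrow> card (B \<inter> B') = 2
          \<longrightarrow> wadd B B' \<in> D)"

lemma admissible_half_card:
  assumes "admissible_half D P Y"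
  shows "2 * card Y = card P"
proof -
  have "card P = card Y + card (P - Y)"
    using assms unfolding admissible_half_def by (metis card_Diff_subset card_mono finite_subset le_add_diff_inverse)
  with assms show ?thesis
    unfolding admissible_half_def by simp
qed

lemma admissible_half_block_subset:
  assumes "admissible_half D P Y" "B \<in> D" "{p, q, t} \<subseteq> B \<inter> Y" "distinct [p, q, t]"
  shows "B \<subseteq> Y"
proof -
  have "finite B"
    using assms(1,2) unfolding admissible_half_def by (meson finite_subset)
  then have "card {p, q, t} \<le> card (B \<inter> Y)"
    using assms(3) by (intro card_mono) auto
  with assms show ?thesis
    unfolding admissible_half_def by auto
qed

lemma admissible_half_pasch:
  assumes "admissible_half D P Y" "B \<in> D" "B' \<in> D" "B \<subseteq> Y \<or> B \<inter> Y = {}"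
    "card (B' \<inter> Y) = 2" "card (B \<inter> B') = 2"
  shows "wadd B B' \<in> D"
  using assms unfolding admissible_half_def by blast

lemma admissible_half_image:
  assumes f: "bij_betw f P P" and Y: "admissible_half D P Y"
  shows "admissible_half (image f ` D) P (f ` Y)"
proof -
  have inj: "inj_on f P" and fP: "f ` P = P"
    using f by (auto simp: bij_betw_def)
  have YP: "Y \<subseteq> P" and DP: "\<forall>B\<in>D. B \<subseteq> P \<and> card B = 4"
    using Y by (simp_all add: admissible_half_def)
  have card_img: "card (f ` A) = card A" if "A \<subseteq> P" for A
    using inj that by (meson card_image inj_on_subset)
  have img_Int: "f ` A \<inter> f ` B = f ` (A \<inter> B)" if "A \<subseteq> P" "B \<subseteq> P" for A B
    using inj that by (simp add: inj_on_image_Int)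
  have img_Diff: "f ` A - f ` B = f ` (A - B)" if "A \<subseteq> P" "B \<subseteq> P" for A B
    using inj that by (metis Diff_subset inj_on_image_set_diff subset_trans)
  have img_subset_iff: "f ` A \<subseteq> f ` B \<longleftrightarrow> A \<subseteq> B" if "A \<subseteq> P" "B \<subseteq> P" for A B
    using inj that by (metis inj_on_image_mem_iff image_mono image_subset_iff subset_iff)
  have [simp]: "A \<inter> B \<subseteq> P" "A - B \<subseteq> P" if "A \<subseteq> P" for A B
    using that by auto
  have "P - f ` Y = f ` (P - Y)"
    using img_Diff[OF _ YP, of P] fP by simp
  moreover have "f ` Y \<subseteq> P" "\<forall>B\<in>D. f ` B \<subseteq> P"
    using YP DP fP by blast+
  moreover have "\<forall>B\<in>D. \<forall>B'\<in>D. (f ` B \<subseteq> f ` Y \<or> f ` B \<inter> f ` Y = {}) \<longrightarrow> card (f ` B' \<inter> f ` Y) = 2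
      \<longrightarrow> card (f ` B \<inter> f ` B') = 2 \<longrightarrow> wadd (f ` B) (f ` B') \<in> image f ` D"
    using Y DP YP by (simp add: admissible_half_def img_Int card_img img_subset_iff image_wadd[OF inj, symmetric])
  ultimately show ?thesis
    using Y DP YP unfolding admissible_half_def
    by (simp add: img_Int img_Diff card_img img_subset_iff)
qed

lemma admissible_half_compl:
  assumes Y: "admissible_half D P Y"
  shows "admissible_half D P (P - Y)"
proof -
  have YP: "Y \<subseteq> P" and fin: "finite P" and DP: "\<forall>B\<in>D. B \<subseteq> P \<and> card B = 4"
    using Y by (simp_all add: admissible_half_def)
  have compl: "B \<inter> (P - Y) = B - Y" "B - (P - Y) = B \<inter> Y" "B \<subseteq> P - Y \<longleftrightarrow> B \<inter> Y = {}"
    "B \<inter> (P - Y) = {} \<longleftrightarrow> B \<subseteq> Y" if "B \<in> D" for B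
    using that DP by auto
  have "card (B - Y) = 2 \<longleftrightarrow> card (B \<inter> Y) = 2" if "B \<in> D" for B
    using that DP card_Int_Diff[of B Y] finite_subset[OF _ fin] by auto
  moreover have "P - (P - Y) = Y"
    using YP by auto
  ultimately show ?thesis
    using Y unfolding admissible_half_def by (simp add: compl Diff_subset conj_commute disj_commute)
qed

inductive_set half_span :: "'p set set \<Rightarrow> 'p set \<Rightarrow> 'p set set" for D Y where
  empty: "{} \<in> half_span D Y"
| split_block: "B \<in> D \<Longrightarrow> card (B \<inter> Y) = 2 \<Longrightarrow> B \<in> half_span D Y"
| add_block: "z \<in> half_span D Y \<Longrightarrow> B \<in> D \<Longrightarrow> B \<subseteq> Y \<or> B \<inter> Y = {} \<Longrightarrow> wadd z B \<in> half_span D Y"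

lemma half_span_subset:
  assumes "\<forall>B\<in>D. B \<subseteq> P"
  shows "z \<in> half_span D Y \<Longrightarrow> z \<subseteq> P"
  by (induction z rule: half_span.induct) (use assms in \<open>auto simp: wadd_subset\<close>)

lemma half_span_image:
  assumes inj: "inj_on f P" and YP: "Y \<subseteq> P" and DP: "\<forall>B\<in>D. B \<subseteq> P"
  shows "z \<in> half_span D Y \<Longrightarrow> f ` z \<in> half_span (image f ` D) (f ` Y)"
proof (induction z rule: half_span.induct)
  case empty
  then show ?case
    using half_span.empty by simp
next
  case (split_block B)
  then have "card (f ` B \<inter> f ` Y) = 2"
    using inj YP DP by (metis card_image inf_le2 inj_on_image_Int inj_on_subset)
  with split_block show ?case
    by (blast intro: half_span.split_block)
next
  case (add_block z B)
  then have "z \<subseteq> P" "B \<subseteq> P"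
    using half_span_subset DP by blast+
  then have "f ` wadd z B = wadd (f ` z) (f ` B)" "f ` B \<subseteq> f ` Y \<or> f ` B \<inter> f ` Y = {}"
    using add_block.hyps(3) inj YP image_wadd by (blast, metis image_empty image_mono inj_on_image_Int)
  with add_block show ?case
    by (metis half_span.add_block image_eqI)
qed

section \<open>The quadruple system \<open>SQS\<^sub>\<tau>\<close>\<close>

lemma quadruples_eq:
  "{Pair h ` {a, b, c, d} | a b c d. a \<in> vecs r \<and> b \<in> vecs r \<and> c \<in> vecs r \<and> d \<in> vecs r
      \<and> distinct [a, b, c, d] \<and> vadd (vadd a b) (vadd c d) = {}}
   = {Pair h ` X | X. X \<subseteq> vecs r \<and> card X = 4 \<and> vsum X = {}}" (is "?L = ?R")
proof
  show "?L \<subseteq> ?R"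
  proof
    fix z assume "z \<in> ?L"
    then obtain a b c d where z: "z = Pair h ` {a, b, c, d}" and abcd: "{a, b, c, d} \<subseteq> vecs r"
        "distinct [a, b, c, d]" "vadd (vadd a b) (vadd c d) = {}"
      by auto
    then have "card {a, b, c, d} = 4" "vsum {a, b, c, d} = {}"
      by (simp_all only: card_eq_4_iff vsum_quad) blast
    with z abcd(1) show "z \<in> ?R"
      by blast
  qed
next
  show "?R \<subseteq> ?L"
  proof
    fix z assume "z \<in> ?R"
    then obtain X where z: "z = Pair h ` X" and X: "X \<subseteq> vecs r" "card X = 4" "vsum X = {}"
      by blast
    then obtain a b c d where abcd: "X = {a, b, c, d}" "distinct [a, b, c, d]"
      by (meson card_eq_4_iff)
    with X have "vadd (vadd a b) (vadd c d) = {}"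
      by (simp only: vsum_quad)
    with z X abcd show "z \<in> ?L"
      by blast
  qed
qed

locale perm_fixing_zero =
  fixes r :: nat and \<tau> :: "nat set \<Rightarrow> nat set"
  assumes bij: "bij_betw \<tau> (vecs r) (vecs r)" and fixes_zero: "\<tau> {} = {}"
begin

lemma tau_in_vecs [simp]: "a \<in> vecs r \<Longrightarrow> \<tau> a \<in> vecs r"
  using bij bij_betwE by blast

lemma tau_image_vecs: "\<tau> ` vecs r \<subseteq> vecs r"
  by auto

lemma tau_eq_iff: "a \<in> vecs r \<Longrightarrow> b \<in> vecs r \<Longrightarrow> \<tau> a = \<tau> b \<longleftrightarrow> a = b"
  using bij unfolding bij_betw_def inj_on_def by blast

lemma tau_eq_empty_iff: "a \<in> vecs r \<Longrightarrow> \<tau> a = {} \<longleftrightarrow> a = {}"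
  and empty_eq_tau_iff: "a \<in> vecs r \<Longrightarrow> {} = \<tau> a \<longleftrightarrow> a = {}"
  using tau_eq_iff[of a "{}"] fixes_zero by auto

lemma Qtau_eq:
  "Qtau r \<tau> = {Pair False ` X \<union> Pair True ` Y | X Y. X \<subseteq> vecs r \<and> Y \<subseteq> vecs r
     \<and> card X = 2 \<and> card Y = 2 \<and> \<tau> (vsum X) = vsum Y}" (is "_ = ?R")
proof
  show "Qtau r \<tau> \<subseteq> ?R"
  proof
    fix z assume "z \<in> Qtau r \<tau>"
    then obtain a b c d where z: "z = Pair False ` {a, c} \<union> Pair True ` {b, d}"
        and abcd: "{a, c} \<subseteq> vecs r" "{b, d} \<subseteq> vecs r" "\<tau> (vadd a c) = vadd b d" "b \<noteq> d"
      unfolding Qtau_def by auto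
    moreover have "a \<noteq> c"
    proof
      assume "a = c"
      then have "vadd b d = {}"
        using abcd(3) fixes_zero by simp
      with abcd(4) show False
        by simp
    qed
    ultimately have "card {a, c} = 2" "card {b, d} = 2" "\<tau> (vsum {a, c}) = vsum {b, d}"
      by (simp_all add: vsum_pair)
    with z abcd(1,2) show "z \<in> ?R"
      by blast
  qed
next
  show "?R \<subseteq> Qtau r \<tau>"
  proof
    fix z assume "z \<in> ?R"
    then obtain X Y where z: "z = Pair False ` X \<union> Pair True ` Y"
        and XY: "X \<subseteq> vecs r" "Y \<subseteq> vecs r" "card X = 2" "card Y = 2" "\<tau> (vsum X) = vsum Y"
      by blast
    then obtain a b c d where abcd: "X = {a, c}" "a \<noteq> c" "Y = {b, d}" "b \<noteq> d"
      by (meson card_2_iff)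
    with XY have "\<tau> (vadd a c) = vadd b d" "vadd b d \<noteq> {}"
      by (simp_all add: vsum_pair)
    with z XY(1,2) abcd(1,3) show "z \<in> Qtau r \<tau>"
      unfolding Qtau_def by blast
  qed
qed

lemma SQS_concat_w_iff:
  "concat_w X Y \<in> SQS r \<tau> \<longleftrightarrow> X \<subseteq> vecs r \<and> Y \<subseteq> vecs r
     \<and> (card X = 4 \<and> Y = {} \<and> vsum X = {} \<or> card X = 2 \<and> card Y = 2 \<and> \<tau> (vsum X) = vsum Y
        \<or> X = {} \<and> card Y = 4 \<and> vsum Y = {})"
proof -
  have "Pair False ` X' = concat_w X' {}" "Pair True ` Y' = concat_w {} Y'"
    "Pair False ` X' \<union> Pair True ` Y' = concat_w X' Y'" for X' Y'
    by (simp_all add: concat_w_def)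
  then have "concat_w X Y \<in> Q0 r \<longleftrightarrow> X \<subseteq> vecs r \<and> card X = 4 \<and> vsum X = {} \<and> Y = {}"
    "concat_w X Y \<in> Q1 r \<longleftrightarrow> Y \<subseteq> vecs r \<and> card Y = 4 \<and> vsum Y = {} \<and> X = {}"
    "concat_w X Y \<in> Qtau r \<tau> \<longleftrightarrow> X \<subseteq> vecs r \<and> Y \<subseteq> vecs r
       \<and> card X = 2 \<and> card Y = 2 \<and> \<tau> (vsum X) = vsum Y"
    unfolding Q0_def Q1_def quadruples_eq Qtau_eq by auto
  then show ?thesis
    unfolding SQS_def by auto
qed

lemma SQS_iff: "z \<in> SQS r \<tau> \<longleftrightarrow> is_S_word r \<tau> z \<and> card z = 4"
proof -
  obtain X Y where z: "z = concat_w X Y"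
    by (metis concat_w_halves)
  have "X \<subseteq> vecs r \<and> Y \<subseteq> vecs r \<and> even (card X) \<and> even (card Y) \<and> \<tau> (vsum X) = vsum Y
      \<and> card X + card Y = 4
    \<longleftrightarrow> X \<subseteq> vecs r \<and> Y \<subseteq> vecs r
      \<and> (card X = 4 \<and> Y = {} \<and> vsum X = {} \<or> card X = 2 \<and> card Y = 2 \<and> \<tau> (vsum X) = vsum Y
         \<or> X = {} \<and> card Y = 4 \<and> vsum Y = {})" (is "?L \<longleftrightarrow> ?R")
  proof
    assume L: ?L
    then have "finite X" "finite Y" "vsum X \<in> vecs r"
      using finite_subset[OF _ finite_vecs] vsum_in_vecs by blast+
    have "even (card X)" "even (card Y)" "card X + card Y = 4"
      using L by simp_all
    then have "card X = 0 \<and> card Y = 4 \<or> card X = 2 \<and> card Y = 2 \<or> card X = 4 \<and> card Y = 0"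
      by presburger
    then show ?R
    proof (elim disjE conjE)
      assume "card X = 0" "card Y = 4"
      with L \<open>finite X\<close> show ?thesis
        by (simp add: fixes_zero)
    next
      assume "card X = 2" "card Y = 2"
      with L show ?thesis
        by simp
    next
      assume "card X = 4" "card Y = 0"
      with L \<open>finite Y\<close> \<open>vsum X \<in> vecs r\<close> show ?thesis
        by (simp add: tau_eq_empty_iff)
    qed
  qed (auto simp: fixes_zero)
  moreover have "card (concat_w X Y) = card X + card Y" if "X \<subseteq> vecs r" "Y \<subseteq> vecs r"
    using card_concat_w finite_subset[OF that(1) finite_vecs] finite_subset[OF that(2) finite_vecs] .
  ultimately show ?thesis
    unfolding z SQS_concat_w_iff is_S_word_def half_concat_w concat_w_subset_positions_iff
    by (metis (no_types, lifting))
qed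

lemma SQS_eq: "SQS r \<tau> = {z \<in> S_code r \<tau>. card z = 4}"
  using SQS_iff S_code_iff[OF tau_image_vecs] by blast

lemma S_code_subset_positions: "z \<in> S_code r \<tau> \<Longrightarrow> z \<subseteq> positions r"
  by (simp add: S_code_iff[OF tau_image_vecs] is_S_word_def)

lemma SQS_block: "B \<in> SQS r \<tau> \<Longrightarrow> B \<subseteq> positions r \<and> card B = 4 \<and> is_S_word r \<tau> B"
  by (simp add: SQS_iff is_S_word_def)

definition mixed_block :: "nat set \<Rightarrow> nat set \<Rightarrow> nat set \<Rightarrow> (bool \<times> nat set) set" where
  "mixed_block a b s = concat_w {a, vadd a s} {b, vadd b (\<tau> s)}"

lemma concat_w_pair_in_SQS_iff:
  assumes "a \<in> vecs r" "c \<in> vecs r" "b \<in> vecs r" "d \<in> vecs r"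
  shows "concat_w {a, c} {b, d} \<in> SQS r \<tau> \<longleftrightarrow> a \<noteq> c \<and> b \<noteq> d \<and> \<tau> (vadd a c) = vadd b d"
  using assms by (cases "a = c"; cases "b = d") (simp_all add: SQS_concat_w_iff vsum_pair)

lemma mixed_block_in_SQS:
  assumes "a \<in> vecs r" "b \<in> vecs r" "s \<in> vecs r" "s \<noteq> {}"
  shows "mixed_block a b s \<in> SQS r \<tau>"
  using assms by (simp add: mixed_block_def concat_w_pair_in_SQS_iff vadd_eq_left_iff tau_eq_empty_iff)

lemma SQS_blockE:
  assumes "B \<in> SQS r \<tau>"
  obtains (pure) "half False B = {} \<or> half True B = {}"
    | (mixed) a b s where "a \<in> vecs r" "b \<in> vecs r" "s \<in> vecs r" "s \<noteq> {}" "B = mixed_block a b s"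
proof -
  obtain X Y where B: "B = concat_w X Y"
    by (metis concat_w_halves)
  show ?thesis
  proof (cases "card X = 2 \<and> card Y = 2")
    case True
    then obtain a c b d where "X = {a, c}" "Y = {b, d}" "a \<noteq> c" "b \<noteq> d"
      by (meson card_2_iff)
    moreover have "a \<in> vecs r" "c \<in> vecs r" "b \<in> vecs r" "d \<in> vecs r"
      using assms unfolding B calculation by (simp_all add: SQS_concat_w_iff)
    moreover have "\<tau> (vadd a c) = vadd b d"
      using assms calculation by (simp add: B concat_w_pair_in_SQS_iff)
    ultimately show ?thesis
      using mixed[of a b "vadd a c"] B by (simp add: mixed_block_def)
  next
    case False
    then show ?thesis
      using assms pure by (auto simp: B SQS_concat_w_iff)
  qed
qed

lemma pure_block_vsum:
  assumes "B \<in> SQS r \<tau>" "half False B = {} \<or> half True B = {}"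
  shows "vsum (half False B) = {}" "vsum (half True B) = {}"
proof -
  have "is_S_word r \<tau> B"
    using SQS_block assms(1) by blast
  then have "\<tau> (vsum (half False B)) = vsum (half True B)" "vsum (half False B) \<in> vecs r"
    by (simp_all add: is_S_word_def vsum_in_vecs half_subset_vecs)
  with assms(2) show "vsum (half False B) = {}" "vsum (half True B) = {}"
    by (auto simp: fixes_zero tau_eq_empty_iff)
qed

lemma pure_quad_in_SQS: "Q \<in> hamming r \<Longrightarrow> card Q = 4 \<Longrightarrow> Pair h ` Q \<in> SQS r \<tau>"
  using SQS_concat_w_iff[of Q "{}"] SQS_concat_w_iff[of "{}" Q]
  by (cases h) (auto simp: hamming_iff concat_w_def)

lemma wadd_pure_block_in_SQS:
  assumes "B \<in> SQS r \<tau>" "B' \<in> SQS r \<tau>" "half False B = {} \<or> half True B = {}"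
    "card (B \<inter> B') = 2"
  shows "wadd B B' \<in> SQS r \<tau>"
proof -
  have B: "B \<subseteq> positions r" "card B = 4" "is_S_word r \<tau> B"
    and B': "B' \<subseteq> positions r" "card B' = 4" "is_S_word r \<tau> B'"
    using SQS_block assms(1,2) by blast+
  have "vsum (half False B) = {}" "vsum (half True B) = {}"
    using pure_block_vsum[OF assms(1,3)] by blast+
  then have "is_S_word r \<tau> (wadd B' B)"
    using B by (intro is_S_word_wadd[OF B'(3)]) (simp_all add: is_S_word_def)
  moreover have "card (wadd B' B) + 2 * card (B' \<inter> B) = card B' + card B"
    using B(1) B'(1) by (intro card_wadd) (auto intro: finite_subset)
  then have "card (wadd B' B) = 4"
    using B(2) B'(2) assms(4) by (simp add: Int_commute)
  ultimately show ?thesis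
    unfolding SQS_iff wadd_commute[of B B'] by blast
qed

lemma first_half_admissible: "admissible_half (SQS r \<tau>) (positions r) (first_half r)"
proof -
  let ?D = "SQS r \<tau>" and ?A = "first_half r"
  have halves: "card (half False B) + card (half True B) = 4" "even (card (half False B))"
    "even (card (half True B))" "finite (half False B)" "finite (half True B)" if "B \<in> ?D" for B
    using SQS_block[OF that] card_halves finite_half by (auto simp: is_S_word_def)
  have subset_iff: "B \<subseteq> ?A \<longleftrightarrow> half True B = {}" and disjoint_iff: "B \<inter> ?A = {} \<longleftrightarrow> half False B = {}"
    if "B \<in> ?D" for B
    using SQS_block[OF that] Diff_first_half[of B r] Int_first_half[of B r] by auto
  have "card (positions r - ?A) = card ?A"
    using Diff_first_half[of "positions r" r] by (simp add: half_def)
  moreover have "3 \<le> card (B \<inter> ?A) \<longrightarrow> B \<subseteq> ?A" "3 \<le> card (B - ?A) \<longrightarrow> B \<inter> ?A = {}"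
    if "B \<in> ?D" for B
  proof -
    have "3 \<le> card (half False B) \<longrightarrow> card (half True B) = 0"
      "3 \<le> card (half True B) \<longrightarrow> card (half False B) = 0"
      using halves(1-3)[OF that] by presburger+
    moreover have "B \<subseteq> positions r"
      using SQS_block[OF that] by blast
    then have "card (B \<inter> ?A) = card (half False B)" "card (B - ?A) = card (half True B)"
      by (simp_all only: Int_first_half Diff_first_half card_image_Pair)
    ultimately show "3 \<le> card (B \<inter> ?A) \<longrightarrow> B \<subseteq> ?A" "3 \<le> card (B - ?A) \<longrightarrow> B \<inter> ?A = {}"
      unfolding subset_iff[OF that] disjoint_iff[OF that] using halves(4,5)[OF that] card_0_eq by metis+
  qed
  moreover have "wadd B B' \<in> ?D"
    if "B \<in> ?D" "B' \<in> ?D" "B \<subseteq> ?A \<or> B \<inter> ?A = {}" "card (B \<inter> B') = 2" for B B'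
  proof -
    have "half False B = {} \<or> half True B = {}"
      using that(3) subset_iff[OF that(1)] disjoint_iff[OF that(1)] by blast
    then show ?thesis
      using wadd_pure_block_in_SQS[OF that(1,2) _ that(4)] by blast
  qed
  moreover have "?A \<subseteq> positions r" "\<forall>B\<in>?D. B \<subseteq> positions r \<and> card B = 4"
    using SQS_block by auto
  ultimately show ?thesis
    unfolding admissible_half_def by simp
qed

lemma wadd_hamming_in_half_span:
  assumes "X \<in> hamming r" "w \<in> half_span (SQS r \<tau>) (first_half r)"
  shows "wadd w (Pair h ` X) \<in> half_span (SQS r \<tau>) (first_half r)"
  using assms
proof (induction "card X" arbitrary: X w rule: less_induct)
  case less
  show ?case
  proof (cases "X = {}")
    case True
    with less.prems show ?thesis
      by simp
  next
    case False
    then obtain Q where Q: "Q \<in> hamming r" "card Q = 4" "3 \<le> card (X \<inter> Q)"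
      using less.prems(1) hamming_quad_meeting by blast
    have "card (wadd X Q) + 2 * card (X \<inter> Q) = card X + card Q"
      using less.prems(1) Q(1) by (intro card_wadd) (simp_all add: finite_hamming)
    with Q have "card (wadd X Q) < card X"
      by linarith
    moreover have "wadd X Q \<in> hamming r"
      using less.prems(1) Q(1) by (rule wadd_in_hamming)
    moreover have "Pair h ` Q \<subseteq> first_half r \<or> Pair h ` Q \<inter> first_half r = {}"
      using Q(1) by (cases h) (auto simp: hamming_iff)
    then have "wadd w (Pair h ` Q) \<in> half_span (SQS r \<tau>) (first_half r)"
      by (intro half_span.add_block[OF less.prems(2) pure_quad_in_SQS[OF Q(1,2)]])
    ultimately have "wadd (wadd w (Pair h ` Q)) (Pair h ` wadd X Q) \<in> half_span (SQS r \<tau>) (first_half r)"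
      using less.hyps by blast
    moreover have "Pair h ` wadd X Q = wadd (Pair h ` X) (Pair h ` Q)"
      by (rule image_wadd[of _ UNIV]) (simp_all add: inj_on_def)
    ultimately show ?thesis
      by (simp add: wadd_assoc wadd_commute[of "Pair h ` Q"])
  qed
qed

lemma S_word_in_half_span:
  assumes z: "is_S_word r \<tau> z"
  shows "z \<in> half_span (SQS r \<tau>) (first_half r)"
proof -
  let ?s = "vsum (half False z)"
  have s: "?s \<in> vecs r"
    using z by (simp add: is_S_word_def half_subset_vecs vsum_in_vecs)
  define B where "B = (if ?s = {} then {} else mixed_block {} {} ?s)"
  have B: "B \<in> half_span (SQS r \<tau>) (first_half r)"
  proof (cases "?s = {}")
    case False
    then have "mixed_block {} {} ?s \<inter> first_half r = {(False, {}), (False, ?s)}"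
      using s by (auto simp: mixed_block_def concat_w_def)
    with False have "card (mixed_block {} {} ?s \<inter> first_half r) = 2"
      by simp
    with False s show ?thesis
      by (simp add: B_def half_span.split_block mixed_block_in_SQS)
  qed (simp add: B_def half_span.empty)
  have "half False B \<subseteq> vecs r" "half True B \<subseteq> vecs r"
    "even (card (half False B))" "even (card (half True B))"
    "vsum (half False B) = ?s" "vsum (half True B) = \<tau> ?s"
    using s by (simp_all add: B_def mixed_block_def vsum_pair fixes_zero empty_eq_tau_iff)
  then have "wadd (half h z) (half h B) \<in> hamming r" for h
    using z by (cases h) (simp_all add: wadd_in_hamming_of_vsum_eq is_S_word_def half_subset_vecs)
  then have "wadd (wadd B (Pair False ` wadd (half False z) (half False B)))
      (Pair True ` wadd (half True z) (half True B)) \<in> half_span (SQS r \<tau>) (first_half r)"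
    using B wadd_hamming_in_half_span by blast
  moreover have "wadd (wadd B (Pair False ` wadd (half False z) (half False B)))
      (Pair True ` wadd (half True z) (half True B)) = z"
  proof (rule word_eqI)
    fix h
    show "half h (wadd (wadd B (Pair False ` wadd (half False z) (half False B)))
        (Pair True ` wadd (half True z) (half True B))) = half h z"
      by (cases h) simp_all
  qed
  ultimately show ?thesis
    by simp
qed

section \<open>Codewords from an arbitrary admissible half\<close>

text \<open>Pasch move: \<open>mixed_block a b x\<close> meets \<open>Y\<close> exactly in \<open>(False, a)\<close>, \<open>(True, b)\<close>, so its sum
  with \<open>mixed_block a b s\<close> is a block, and that block encodes the additivity relation.\<close>

lemma tau_add_of_outside:
  assumes Y: "admissible_half (SQS r \<tau>) (positions r) Y"
    and vecs: "a \<in> vecs r" "b \<in> vecs r" "s \<in> vecs r" "x \<in> vecs r" and "s \<noteq> {}"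
    and B_Y: "mixed_block a b s \<subseteq> Y" and out: "(False, vadd a x) \<notin> Y"
  shows "\<tau> (vadd x s) = vadd (\<tau> x) (\<tau> s)"
proof -
  let ?B = "mixed_block a b s" and ?B' = "mixed_block a b x"
  have in_Y: "(False, a) \<in> Y" "(False, vadd a s) \<in> Y" "(True, b) \<in> Y"
    using B_Y by (auto simp: mixed_block_def concat_w_def)
  then have "x \<noteq> {}" "x \<noteq> s"
    using out by auto
  then have ne: "\<tau> x \<noteq> {}" "\<tau> x \<noteq> \<tau> s" "\<tau> s \<noteq> {}"
    using vecs \<open>s \<noteq> {}\<close> by (simp_all add: tau_eq_empty_iff tau_eq_iff)
  have blocks: "?B \<in> SQS r \<tau>" "?B' \<in> SQS r \<tau>"
    using vecs \<open>s \<noteq> {}\<close> \<open>x \<noteq> {}\<close> by (simp_all add: mixed_block_in_SQS)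
  have "(True, vadd b (\<tau> x)) \<notin> Y"
  proof
    assume "(True, vadd b (\<tau> x)) \<in> Y"
    with in_Y have "{(False, a), (True, b), (True, vadd b (\<tau> x))} \<subseteq> ?B' \<inter> Y"
      by (auto simp: mixed_block_def concat_w_def)
    then have "?B' \<subseteq> Y"
      using admissible_half_block_subset[OF Y blocks(2)] ne(1) by (simp add: vadd_eq_left_iff)
    with out show False
      by (auto simp: mixed_block_def concat_w_def)
  qed
  with in_Y out have "?B' \<inter> Y = {(False, a), (True, b)}"
    by (auto simp: mixed_block_def concat_w_def)
  moreover have "?B \<inter> ?B' = {(False, a), (True, b)}"
    using \<open>x \<noteq> {}\<close> \<open>x \<noteq> s\<close> \<open>s \<noteq> {}\<close> ne
    by (auto simp: mixed_block_def concat_w_def vadd_eq_left_iff)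
  ultimately have "wadd ?B ?B' \<in> SQS r \<tau>"
    using admissible_half_pasch[OF Y blocks] B_Y by simp
  moreover have "wadd ?B ?B' = concat_w {vadd a s, vadd a x} {vadd b (\<tau> s), vadd b (\<tau> x)}"
    using \<open>x \<noteq> {}\<close> \<open>x \<noteq> s\<close> \<open>s \<noteq> {}\<close> ne
    by (simp add: mixed_block_def wadd_concat_w wadd_pairs vadd_eq_left_iff tau_eq_empty_iff)
  ultimately have "\<tau> (vadd (vadd a s) (vadd a x)) = vadd (vadd b (\<tau> s)) (vadd b (\<tau> x))"
    using vecs by (simp add: concat_w_pair_in_SQS_iff)
  then show ?thesis
    by (simp add: vadd_assoc vadd_commute vadd_left_commute)
qed

lemma mixed_block_subset:
  assumes Y: "admissible_half (SQS r \<tau>) (positions r) Y"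
    and "a \<in> vecs r" "b \<in> vecs r" "s \<in> vecs r" "s \<noteq> {}"
    and "(False, a) \<in> Y" "(False, vadd a s) \<in> Y" "(True, b) \<in> Y"
  shows "mixed_block a b s \<subseteq> Y"
proof (rule admissible_half_block_subset[OF Y mixed_block_in_SQS])
  show "{(False, a), (False, vadd a s), (True, b)} \<subseteq> mixed_block a b s \<inter> Y"
    using assms by (auto simp: mixed_block_def concat_w_def)
qed (use assms in \<open>simp_all add: vadd_eq_left_iff\<close>)

lemma first_half_triple_sum:
  assumes Y: "admissible_half (SQS r \<tau>) (positions r) Y"
    and pqt: "{p, q, t} \<subseteq> vecs r" "distinct [p, q, t]"
    and "(False, p) \<in> Y" "(False, q) \<in> Y" "(False, t) \<in> Y"
  shows "(False, vadd p (vadd q t)) \<in> Y"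
proof -
  define Q where "Q = {p, q, t, vadd p (vadd q t)}"
  have "Pair False ` Q \<in> SQS r \<tau>"
    unfolding Q_def by (rule pure_quad_in_SQS[OF triple_completion_in_hamming[OF pqt]])
  moreover have "{(False, p), (False, q), (False, t)} \<subseteq> Pair False ` Q \<inter> Y"
    using assms(4-6) by (simp add: Q_def)
  ultimately have "Pair False ` Q \<subseteq> Y"
    using admissible_half_block_subset[OF Y] pqt(2) by simp
  then show ?thesis
    by (simp add: Q_def)
qed

lemma first_half_translate_outside:
  assumes Y: "admissible_half (SQS r \<tau>) (positions r) Y"
    and vecs: "a \<in> vecs r" "v \<in> vecs r" "e \<in> vecs r" and "v \<noteq> {}"
    and "(False, a) \<in> Y" "(False, vadd a v) \<in> Y" "(False, e) \<notin> Y"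
  shows "(False, vadd e v) \<notin> Y"
proof
  assume ev: "(False, vadd e v) \<in> Y"
  have "e \<noteq> a" "e \<noteq> vadd a v"
    using assms(6-8) by auto
  then have "distinct [a, vadd a v, vadd e v]"
    using \<open>v \<noteq> {}\<close> by (auto simp: vadd_def)
  then have "(False, vadd a (vadd (vadd a v) (vadd e v))) \<in> Y"
    using first_half_triple_sum[OF Y _ _ assms(6,7) ev] vecs by simp
  with assms(8) show False
    by (simp add: vadd_assoc vadd_commute vadd_left_commute)
qed

text \<open>With \<open>(False, e) \<notin> Y\<close> and \<open>w = a + e\<close>, the relations at \<open>(w + v, s)\<close>, \<open>(w, v)\<close> and
  \<open>(w, v + s)\<close> all fall under \<open>tau_add_of_outside\<close> (for the blocks through \<open>a, a + s\<close>, \<open>a, a + v\<close> and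
  \<open>a, a + v + s\<close>), and together they give the relation at \<open>(v, s)\<close>.\<close>

lemma tau_add_along_block:
  assumes Y: "admissible_half (SQS r \<tau>) (positions r) Y"
    and vecs: "a \<in> vecs r" "b \<in> vecs r" "s \<in> vecs r" "v \<in> vecs r" and "s \<noteq> {}"
    and B_Y: "mixed_block a b s \<subseteq> Y" and e: "e \<in> vecs r" "(False, e) \<notin> Y"
  shows "\<tau> (vadd v s) = vadd (\<tau> v) (\<tau> s)"
proof (cases "(False, vadd a v) \<in> Y \<and> v \<noteq> {} \<and> v \<noteq> s")
  case False
  then show ?thesis
    using tau_add_of_outside[OF Y vecs \<open>s \<noteq> {}\<close> B_Y] by (auto simp: fixes_zero)
next
  case True
  then have p: "(False, vadd a v) \<in> Y" and "v \<noteq> {}" "v \<noteq> s"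
    by auto
  have in_Y: "(False, a) \<in> Y" "(False, vadd a s) \<in> Y" "(True, b) \<in> Y"
    using B_Y by (auto simp: mixed_block_def concat_w_def)
  let ?w = "vadd a e"
  have "distinct [a, vadd a s, vadd a v]"
    using \<open>v \<noteq> {}\<close> \<open>v \<noteq> s\<close> \<open>s \<noteq> {}\<close> by (simp add: vadd_eq_left_iff)
  then have "(False, vadd a (vadd (vadd a s) (vadd a v))) \<in> Y"
    using first_half_triple_sum[OF Y _ _ in_Y(1,2) p] vecs by simp
  moreover have "vadd a (vadd (vadd a s) (vadd a v)) = vadd a (vadd v s)"
    by (simp add: vadd_assoc vadd_commute vadd_left_commute)
  ultimately have q: "(False, vadd a (vadd v s)) \<in> Y"
    by simp
  have "(False, vadd e v) \<notin> Y"
    using first_half_translate_outside[OF Y vecs(1,4) e(1) \<open>v \<noteq> {}\<close> in_Y(1) p e(2)] .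
  have block_v: "mixed_block a b v \<subseteq> Y"
    using mixed_block_subset[OF Y vecs(1,2,4) \<open>v \<noteq> {}\<close> in_Y(1) p in_Y(3)] .
  have block_vs: "mixed_block a b (vadd v s) \<subseteq> Y"
    using mixed_block_subset[OF Y vecs(1,2) _ _ in_Y(1) q in_Y(3)] vecs \<open>v \<noteq> s\<close> by simp
  have "\<tau> (vadd (vadd ?w v) s) = vadd (\<tau> (vadd ?w v)) (\<tau> s)"
    using tau_add_of_outside[OF Y vecs(1-3) _ \<open>s \<noteq> {}\<close> B_Y, of "vadd ?w v"]
      \<open>(False, vadd e v) \<notin> Y\<close> vecs e(1) by (simp add: vadd_assoc)
  moreover have "\<tau> (vadd ?w v) = vadd (\<tau> ?w) (\<tau> v)"
    using tau_add_of_outside[OF Y vecs(1,2,4) _ \<open>v \<noteq> {}\<close> block_v, of ?w] vecs e by simp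
  moreover have "\<tau> (vadd ?w (vadd v s)) = vadd (\<tau> ?w) (\<tau> (vadd v s))"
    using tau_add_of_outside[OF Y vecs(1,2) _ _ _ block_vs, of ?w] vecs e \<open>v \<noteq> s\<close> by simp
  ultimately have "vadd (\<tau> ?w) (\<tau> (vadd v s)) = vadd (\<tau> ?w) (vadd (\<tau> v) (\<tau> s))"
    by (simp add: vadd_assoc)
  then show ?thesis
    by simp
qed

lemma first_half_point_outside:
  assumes Y: "admissible_half (SQS r \<tau>) (positions r) Y" and "(True, b) \<in> Y"
  obtains e where "e \<in> vecs r" "(False, e) \<notin> Y"
proof (rule ccontr)
  assume "\<not> thesis"
  with that have "insert (True, b) (first_half r) \<subseteq> Y"
    using \<open>(True, b) \<in> Y\<close> by auto
  moreover have "finite Y"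
    using Y unfolding admissible_half_def by (meson finite_positions finite_subset)
  ultimately have "card (insert (True, b) (first_half r)) \<le> card Y"
    by (rule card_mono[rotated])
  moreover have "card (insert (True, b) (first_half r)) = 2 ^ r + 1"
    by (simp add: card_vecs image_iff)
  ultimately show False
    using admissible_half_card[OF Y] card_positions by simp
qed

lemma is_S_word_wadd_block:
  assumes Y: "admissible_half (SQS r \<tau>) (positions r) Y"
    and z: "is_S_word r \<tau> z" and B: "B \<in> SQS r \<tau>" "B \<subseteq> Y"
  shows "is_S_word r \<tau> (wadd z B)"
  using B(1)
proof (cases rule: SQS_blockE)
  case pure
  then show ?thesis
    using SQS_block[OF B(1)] pure_block_vsum[OF B(1)]
    by (intro is_S_word_wadd[OF z]) (simp_all add: is_S_word_def)
next
  case (mixed a b s)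
  then have "(True, b) \<in> Y"
    using B(2) by (auto simp: mixed_block_def concat_w_def)
  then obtain e where "e \<in> vecs r" "(False, e) \<notin> Y"
    using first_half_point_outside[OF Y] by blast
  moreover have "vsum (half False z) \<in> vecs r"
    using z by (simp add: is_S_word_def half_subset_vecs vsum_in_vecs)
  ultimately have "\<tau> (vadd (vsum (half False z)) s) = vadd (\<tau> (vsum (half False z))) (\<tau> s)"
    using tau_add_along_block[OF Y mixed(1-3)] mixed(4,5) B(2) by blast
  with mixed show ?thesis
    using SQS_block[OF B(1)]
    by (intro is_S_word_wadd[OF z])
      (simp_all add: mixed_block_def vsum_pair vadd_eq_left_iff tau_eq_empty_iff empty_eq_tau_iff)
qed

lemma half_span_is_S_word:
  assumes Y: "admissible_half (SQS r \<tau>) (positions r) Y"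
  shows "z \<in> half_span (SQS r \<tau>) Y \<Longrightarrow> is_S_word r \<tau> z"
proof (induction z rule: half_span.induct)
  case empty
  then show ?case
    by (simp add: is_S_word_def fixes_zero)
next
  case (split_block B)
  then show ?case
    using SQS_block by blast
next
  case (add_block z B)
  show ?case
  proof (cases "B \<subseteq> Y")
    case True
    with Y add_block show ?thesis
      using is_S_word_wadd_block by blast
  next
    case False
    with add_block.hyps(3) have "B \<subseteq> positions r - Y"
      using SQS_block[OF add_block.hyps(2)] by blast
    with admissible_half_compl[OF Y] add_block show ?thesis
      using is_S_word_wadd_block by blast
  qed
qed

end

section \<open>Isomorphisms\<close>

lemma S_code_image_subset:
  assumes \<tau>: "perm_fixing_zero r \<tau>" and \<tau>': "perm_fixing_zero r \<tau>'"
    and \<pi>: "bij_betw \<pi> (positions r) (positions r)" and SQS: "image \<pi> ` SQS r \<tau> = SQS r \<tau>'"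
  shows "image \<pi> ` S_code r \<tau> \<subseteq> S_code r \<tau>'"
proof clarify
  fix z
  assume "z \<in> S_code r \<tau>"
  then have "is_S_word r \<tau> z"
    by (simp add: S_code_iff[OF perm_fixing_zero.tau_image_vecs[OF \<tau>]])
  then have "z \<in> half_span (SQS r \<tau>) (first_half r)"
    by (rule perm_fixing_zero.S_word_in_half_span[OF \<tau>])
  moreover have "inj_on \<pi> (positions r)" "first_half r \<subseteq> positions r"
    "\<forall>B\<in>SQS r \<tau>. B \<subseteq> positions r"
    using \<pi> perm_fixing_zero.SQS_block[OF \<tau>] by (auto simp: bij_betw_def)
  ultimately have "\<pi> ` z \<in> half_span (SQS r \<tau>') (\<pi> ` first_half r)"
    using half_span_image SQS by metis
  moreover have "admissible_half (SQS r \<tau>') (positions r) (\<pi> ` first_half r)"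
    using admissible_half_image[OF \<pi> perm_fixing_zero.first_half_admissible[OF \<tau>]] SQS by simp
  ultimately have "is_S_word r \<tau>' (\<pi> ` z)"
    by (intro perm_fixing_zero.half_span_is_S_word[OF \<tau>'])
  then show "\<pi> ` z \<in> S_code r \<tau>'"
    by (simp add: S_code_iff[OF perm_fixing_zero.tau_image_vecs[OF \<tau>']])
qed

lemma image_inv_into_image_family:
  assumes "inj_on f P" "\<forall>X\<in>\<A>. X \<subseteq> P"
  shows "image (inv_into P f) ` image f ` \<A> = \<A>"
proof -
  have "inv_into P f ` f ` X = X" if "X \<in> \<A>" for X
    using assms that by simp
  then show ?thesis
    by (simp add: image_image)
qed

lemma image_family_eqI:
  assumes f: "bij_betw f P P" and "\<forall>X\<in>\<B>. X \<subseteq> P"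
    and "image f ` \<A> \<subseteq> \<B>" "image (inv_into P f) ` \<B> \<subseteq> \<A>"
  shows "image f ` \<A> = \<B>"
proof
  show "\<B> \<subseteq> image f ` \<A>"
  proof
    fix X
    assume X: "X \<in> \<B>"
    have "f ` inv_into P f ` X = X"
      by (rule image_inv_into_cancel) (use f assms(2) X in \<open>auto simp: bij_betw_def\<close>)
    moreover have "inv_into P f ` X \<in> \<A>"
      using assms(4) X by blast
    ultimately show "X \<in> image f ` \<A>"
      by (metis image_eqI)
  qed
qed (rule assms(3))

lemma image_family_card_eq:
  assumes "inj_on f P" "\<forall>X\<in>\<A>. X \<subseteq> P"
  shows "image f ` {X \<in> \<A>. card X = k} = {Y \<in> image f ` \<A>. card Y = k}"
proof -
  have "card (f ` X) = card X" if "X \<in> \<A>" for X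
    using assms that by (meson card_image inj_on_subset)
  then show ?thesis
    by auto
qed

lemma S_code_image_eq:
  assumes \<tau>: "perm_fixing_zero r \<tau>" and \<tau>': "perm_fixing_zero r \<tau>'"
    and \<pi>: "bij_betw \<pi> (positions r) (positions r)" and SQS: "image \<pi> ` SQS r \<tau> = SQS r \<tau>'"
  shows "image \<pi> ` S_code r \<tau> = S_code r \<tau>'"
proof (rule image_family_eqI[OF \<pi>])
  have "inj_on \<pi> (positions r)"
    using \<pi> by (simp add: bij_betw_def)
  then have "image (inv_into (positions r) \<pi>) ` SQS r \<tau>' = SQS r \<tau>"
    unfolding SQS[symmetric]
    by (rule image_inv_into_image_family) (use perm_fixing_zero.SQS_block[OF \<tau>] in blast)
  then show "image (inv_into (positions r) \<pi>) ` S_code r \<tau>' \<subseteq> S_code r \<tau>"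
    using S_code_image_subset[OF \<tau>' \<tau> bij_betw_inv_into[OF \<pi>]] by blast
  show "image \<pi> ` S_code r \<tau> \<subseteq> S_code r \<tau>'"
    using S_code_image_subset[OF \<tau> \<tau>' \<pi> SQS] .
  show "\<forall>X\<in>S_code r \<tau>'. X \<subseteq> positions r"
    using perm_fixing_zero.S_code_subset_positions[OF \<tau>'] by blast
qed

lemma SQS_image_eq:
  assumes \<tau>: "perm_fixing_zero r \<tau>" and \<tau>': "perm_fixing_zero r \<tau>'"
    and \<pi>: "inj_on \<pi> (positions r)" and S: "image \<pi> ` S_code r \<tau> = S_code r \<tau>'"
  shows "image \<pi> ` SQS r \<tau> = SQS r \<tau>'"
proof -
  have "image \<pi> ` SQS r \<tau> = {w \<in> image \<pi> ` S_code r \<tau>. card w = 4}"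
    unfolding perm_fixing_zero.SQS_eq[OF \<tau>]
    using perm_fixing_zero.S_code_subset_positions[OF \<tau>] by (intro image_family_card_eq[OF \<pi>]) blast
  then show ?thesis
    by (simp add: S perm_fixing_zero.SQS_eq[OF \<tau>'])
qed

theorem theorem2:
  fixes r :: nat and \<tau> \<tau>' :: "nat set \<Rightarrow> nat set" and \<pi> :: "bool \<times> nat set \<Rightarrow> bool \<times> nat set"
  assumes "r \<ge> 1"
    and "bij_betw \<tau> (vecs r) (vecs r)" and "\<tau> {} = {}"
    and "bij_betw \<tau>' (vecs r) (vecs r)" and "\<tau>' {} = {}"
    and "bij_betw \<pi> (positions r) (positions r)"
  shows "(image \<pi>) ` SQS r \<tau> = SQS r \<tau>' \<longleftrightarrow> (image \<pi>) ` S_code r \<tau> = S_code r \<tau>'"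
proof -
  have "perm_fixing_zero r \<tau>" "perm_fixing_zero r \<tau>'"
    using assms by (simp_all add: perm_fixing_zero_def)
  with assms(6) show ?thesis
    using S_code_image_eq SQS_image_eq bij_betw_imp_inj_on by metis
qed

end
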